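(* Consider any tuples $(\lambda ,S_k^\lambda ,F_k^\lambda ,P_k^\lambda )_{k = 0}^{N - 1}$ such that $\lambda>0$ and $C(\{ S_k^\lambda \} _{k = 0}^{N - 1} ) = \gamma$, i.e. elements of \[ \Lambda : = \{ (\lambda ,S_k^\lambda ,F_k^\lambda ,P_k^\lambda )_{k = 0}^{N - 1} :\lambda > 0, C(\{ S_k^\lambda \} _{k = 0}^{N - 1} ) = \gamma \}. \] Then, the corresponding $\{(S_k^\lambda,F_k^\lambda)\}_{k=0}^{N-1}$ with $(\lambda ,S_k^\lambda ,F_k^\lambda ,P_k^\lambda )_{k = 0}^{N - 1} \in \Lambda$ is an optimal solution of the constrained LQG (covariance selection) problem.
   Context: Consider the stochastic LTI system $x(k+1)=Ax(k)+Bu(k)+w(k)$ with $x(k)\in\mathbb R^n$, $u(k)\in\mathbb R^m$, $x(0)\sim\mathcal N(z,V)$, $w(k)\sim\mathcal N(0,W)$ mutually independent, and linear feedback $u(k)=F_kx(k)$, $k\in\{0,\dots,N-1\}$. With $S_k=\mathbb E([x(k);u(k)][x(k);u(k)]^T)$, the constrained LQG (covariance selection) problem is: minimize $J_p(\{S_k\})=\mathrm{Tr}\big(Q_f([A\ B]S_{N-1}[A\ B]^T+W)\big)+\sum_{k=0}^{N-1}\mathrm{Tr}(\mathrm{diag}(Q_k,R_k)S_k)$ over $\{S_k,F_k\}$ subject to $S_k=\Phi(F_k,S_{k-1})$ ($k=1,\dots,N-1$), $S_0=[I_n;F_0](V+zz^T)[I_n;F_0]^T$, and $C(\{S_k\})\le\gamma$,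 where $C(\{S_k\})=\mathrm{Tr}\big(\tilde Q_f([A\ B]S_{N-1}[A\ B]^T+W)\big)+\sum_{k=0}^{N-1}\mathrm{Tr}(\mathrm{diag}(\tilde Q_k,\tilde R_k)S_k)$ and $\Phi(F,S)=[I_n;F]([A\ B]S[A\ B]^T+W)[I_n;F]^T$. Assumptions: $Q_f,\tilde Q_f,Q_k,\tilde Q_k\succeq0$, $R_k+\lambda\tilde R_k\succ0$ for all $k$, $\lambda>0$; $V\succ0$, $W\succ0$; strict feasibility of the inequality constraint; and $C(\{S_k^0\})>\gamma$ (the unconstrained LQG solution violates the constraint). For $\lambda\ge0$, $X_N^\lambda=Q_f+\lambda\tilde Q_f$, $X_k^\lambda=A^TX_{k+1}^\lambda A-A^TX_{k+1}^\lambda B(R_k+\lambda\tilde R_k+B^TX_{k+1}^\lambda B)^{-1}B^TX_{k+1}^\lambda A+Q_k+\lambda\tilde Q_k$, $F_k^\lambda=-(R_k+\lambda\tilde R_k+B^TX_{k+1}^\lambda B)^{-1}B^TX_{k+1}^\lambda A$, $S_0^\lambda=[I;F_0^\lambda](V+zz^T)[I;F_0^\lambda]^T$, $S_k^\lambda=\Phi(F_k^\lambda,S_{k-1}^\lambda)$, $P_k^\lambda=\begin{bmatrix}Q_k+\lambda\tilde Q_k+A^TX_{k+1}^\lambda A & A^TX_{k+1}^\lambda B\\ B^TX_{k+1}^\lambda A & R_k+\lambda\tilde R_k+B^TX_{k+1}^\lambda B\end{bmatrix}$. It was shown that $\Lambda$ is exactly the set of KKT points (with Lagrange multipliers $P_k$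 for the equality constraints and $\lambda$ for the inequality constraint) of this problem, and that if $C(\{S_k^\lambda\})=C(\{S_k^{\lambda+\varepsilon}\})$ then $J_p(\{S_k^\lambda\})=J_p(\{S_k^{\lambda+\varepsilon}\})$. *)

theory Defs
  imports "HOL-Analysis.Analysis"
begin

text \<open>State space indexed by the finite type 'n, input space by 'm; the stacked
  vector [x; u] is indexed by the finite sum type ('n + 'm).\<close>

record ('n, 'm) lqg =
  sA :: "real^'n^'n"
  sB :: "real^'m^'n"
  sW :: "real^'n^'n"
  sV :: "real^'n^'n"
  sz :: "real^'n"
  sN :: nat
  sQf :: "real^'n^'n"
  sQ :: "nat \<Rightarrow> real^'n^'n"
  sR :: "nat \<Rightarrow> real^'m^'m"
  sQtf :: "real^'n^'n"
  sQt :: "nat \<Rightarrow> real^'n^'n"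
  sRt :: "nat \<Rightarrow> real^'m^'m"
  sgamma :: real

definition psd :: "real^'n^'n \<Rightarrow> bool" where
  "psd M \<longleftrightarrow> transpose M = M \<and> (\<forall>x. 0 \<le> x \<bullet> (M *v x))"

definition pd :: "real^'n^'n \<Rightarrow> bool" where
  "pd M \<longleftrightarrow> transpose M = M \<and> (\<forall>x. x \<noteq> 0 \<longrightarrow> 0 < x \<bullet> (M *v x))"

definition outer :: "real^'n \<Rightarrow> real^'n^'n" where
  "outer z = (\<chi> i j. z$i * z$j)"

definition IF :: "real^'n^'m \<Rightarrow> real^'n^('n + 'm)" where
  "IF F = (\<chi> r. case r of Inl i \<Rightarrow> (mat 1 :: real^'n^'n)$i | Inr j \<Rightarrow> F$j)"

definition AB :: "real^'n^'n \<Rightarrow> real^'m^'n \<Rightarrow> real^('n + 'm)^'n" where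
  "AB A B = (\<chi> i c. case c of Inl j \<Rightarrow> A$i$j | Inr j \<Rightarrow> B$i$j)"

definition bdiag :: "real^'n^'n \<Rightarrow> real^'m^'m \<Rightarrow> real^('n + 'm)^('n + 'm)" where
  "bdiag Q R = (\<chi> r c. case (r, c) of (Inl i, Inl j) \<Rightarrow> Q$i$j | (Inr i, Inr j) \<Rightarrow> R$i$j | _ \<Rightarrow> 0)"

definition blk :: "real^'n^'n \<Rightarrow> real^'m^'n \<Rightarrow> real^'n^'m \<Rightarrow> real^'m^'m \<Rightarrow> real^('n + 'm)^('n + 'm)" where
  "blk M11 M12 M21 M22 = (\<chi> r c. case (r, c) of (Inl i, Inl j) \<Rightarrow> M11$i$j | (Inl i, Inr j) \<Rightarrow> M12$i$j
      | (Inr i, Inl j) \<Rightarrow> M21$i$j | (Inr i, Inr j) \<Rightarrow> M22$i$j)"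

definition Phi :: "('n::finite, 'm::finite) lqg \<Rightarrow> real^'n^'m \<Rightarrow> real^('n + 'm)^('n + 'm) \<Rightarrow> real^('n + 'm)^('n + 'm)" where
  "Phi P F S = IF F ** (AB (sA P) (sB P) ** S ** transpose (AB (sA P) (sB P)) + sW P) ** transpose (IF F)"

definition Sinit :: "('n::finite, 'm::finite) lqg \<Rightarrow> real^'n^'m \<Rightarrow> real^('n + 'm)^('n + 'm)" where
  "Sinit P F = IF F ** (sV P + outer (sz P)) ** transpose (IF F)"

definition qcost :: "('n::finite, 'm::finite) lqg \<Rightarrow> real^'n^'n \<Rightarrow> (nat \<Rightarrow> real^'n^'n) \<Rightarrow> (nat \<Rightarrow> real^'m^'m)
    \<Rightarrow> (nat \<Rightarrow> real^('n + 'm)^('n + 'm)) \<Rightarrow> real" where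
  "qcost P Qf Q R S =
     trace (Qf ** (AB (sA P) (sB P) ** S (sN P - 1) ** transpose (AB (sA P) (sB P)) + sW P))
     + (\<Sum>k<sN P. trace (bdiag (Q k) (R k) ** S k))"

definition Jp :: "('n::finite, 'm::finite) lqg \<Rightarrow> (nat \<Rightarrow> real^('n + 'm)^('n + 'm)) \<Rightarrow> real" where
  "Jp P S = qcost P (sQf P) (sQ P) (sR P) S"

definition Ccost :: "('n::finite, 'm::finite) lqg \<Rightarrow> (nat \<Rightarrow> real^('n + 'm)^('n + 'm)) \<Rightarrow> real" where
  "Ccost P S = qcost P (sQtf P) (sQt P) (sRt P) S"

definition dyn_feasible :: "('n::finite, 'm::finite) lqg \<Rightarrow> (nat \<Rightarrow> real^('n + 'm)^('n + 'm)) \<Rightarrow> (nat \<Rightarrow> real^'n^'m) \<Rightarrow> bool" where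
  "dyn_feasible P S F \<longleftrightarrow> S 0 = Sinit P (F 0) \<and>
     (\<forall>k. 1 \<le> k \<and> k < sN P \<longrightarrow> S k = Phi P (F k) (S (k - 1)))"

definition feasible :: "('n::finite, 'm::finite) lqg \<Rightarrow> (nat \<Rightarrow> real^('n + 'm)^('n + 'm)) \<Rightarrow> (nat \<Rightarrow> real^'n^'m) \<Rightarrow> bool" where
  "feasible P S F \<longleftrightarrow> dyn_feasible P S F \<and> Ccost P S \<le> sgamma P"

definition optimal :: "('n::finite, 'm::finite) lqg \<Rightarrow> (nat \<Rightarrow> real^('n + 'm)^('n + 'm)) \<Rightarrow> (nat \<Rightarrow> real^'n^'m) \<Rightarrow> bool" where
  "optimal P S F \<longleftrightarrow> feasible P S F \<and> (\<forall>S' F'. feasible P S' F' \<longrightarrow> Jp P S \<le> Jp P S')"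

text \<open>Riccati recursion, indexed by the number j of steps back from N: Xrev P l j = X^l_{N-j}.\<close>
primrec Xrev :: "('n::finite, 'm::finite) lqg \<Rightarrow> real \<Rightarrow> nat \<Rightarrow> real^'n^'n" where
  "Xrev P l 0 = sQf P + l *\<^sub>R sQtf P"
| "Xrev P l (Suc j) =
     (let X = Xrev P l j; k = sN P - Suc j; A = sA P; B = sB P in
      transpose A ** X ** A
      - transpose A ** X ** B ** matrix_inv (sR P k + l *\<^sub>R sRt P k + transpose B ** X ** B) ** transpose B ** X ** A
      + sQ P k + l *\<^sub>R sQt P k)"

definition Xlam :: "('n::finite, 'm::finite) lqg \<Rightarrow> real \<Rightarrow> nat \<Rightarrow> real^'n^'n" where
  "Xlam P l k = Xrev P l (sN P - k)"

definition Flam :: "('n::finite, 'm::finite) lqg \<Rightarrow> real \<Rightarrow> nat \<Rightarrow> real^'n^'m" where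
  "Flam P l k = - (matrix_inv (sR P k + l *\<^sub>R sRt P k + transpose (sB P) ** Xlam P l (k + 1) ** sB P)
                    ** transpose (sB P) ** Xlam P l (k + 1) ** sA P)"

primrec Slam :: "('n::finite, 'm::finite) lqg \<Rightarrow> real \<Rightarrow> nat \<Rightarrow> real^('n + 'm)^('n + 'm)" where
  "Slam P l 0 = Sinit P (Flam P l 0)"
| "Slam P l (Suc k) = Phi P (Flam P l (Suc k)) (Slam P l k)"

definition Plam :: "('n::finite, 'm::finite) lqg \<Rightarrow> real \<Rightarrow> nat \<Rightarrow> real^('n + 'm)^('n + 'm)" where
  "Plam P l k = (let X = Xlam P l (k + 1); A = sA P; B = sB P in
     blk (sQ P k + l *\<^sub>R sQt P k + transpose A ** X ** A) (transpose A ** X ** B)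
         (transpose B ** X ** A) (sR P k + l *\<^sub>R sRt P k + transpose B ** X ** B))"

end

theory Submission
  imports Defs
begin

text \<open>For \<open>\<lambda> > 0\<close> the Lagrangian \<open>J + \<lambda> C\<close> is itself a quadratic cost, whose weights are those
  of \<open>J\<close> plus \<open>\<lambda>\<close> times those of \<open>C\<close>. Completing the square stage by stage along the
  Riccati recursion, via the block identity
  \<open>[I; F]\<^sup>T P\<^sub>k\<^sup>\<lambda> [I; F] = X\<^sub>k\<^sup>\<lambda> + (F - F\<^sub>k\<^sup>\<lambda>)\<^sup>T M\<^sub>k (F - F\<^sub>k\<^sup>\<lambda>)\<close> with \<open>M\<^sub>k\<close> the lower right block of
  \<open>P\<^sub>k\<^sup>\<lambda>\<close>, writes the Lagrangian of every dynamically feasible \<open>{S\<^sub>k, F\<^sub>k}\<close> as a constant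
  depending only on \<open>\<lambda>\<close> plus the gaps \<open>Tr((F\<^sub>k - F\<^sub>k\<^sup>\<lambda>)\<^sup>T M\<^sub>k (F\<^sub>k - F\<^sub>k\<^sup>\<lambda>) \<Sigma>\<^sub>k)\<close>, where \<open>\<Sigma>\<^sub>k\<close> is
  the state covariance. The gaps are traces of products of positive semidefinite matrices,
  hence nonnegative, and vanish for \<open>F\<^sup>\<lambda>\<close>. So \<open>J(S\<^sup>\<lambda>) + \<lambda>\<gamma>\<close> is the minimum of the Lagrangian,
  and every feasible \<open>S\<close> has \<open>J(S) \<ge> J(S) + \<lambda>(C(S) - \<gamma>) \<ge> J(S\<^sup>\<lambda>)\<close>.

  Nonnegativity of \<open>Tr(A B)\<close> for positive semidefinite \<open>A\<close>, \<open>B\<close> is proved by induction on the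
  index set, eliminating one index at a time by a Schur complement.\<close>

section \<open>Positive semidefinite forms on finite index sets\<close>

definition quad_form :: "'a set \<Rightarrow> ('a \<Rightarrow> 'a \<Rightarrow> real) \<Rightarrow> ('a \<Rightarrow> real) \<Rightarrow> real" where
  "quad_form I f x = (\<Sum>i\<in>I. \<Sum>j\<in>I. x i * f i j * x j)"

definition psd_on :: "'a set \<Rightarrow> ('a \<Rightarrow> 'a \<Rightarrow> real) \<Rightarrow> bool" where
  "psd_on I f \<longleftrightarrow> (\<forall>x. 0 \<le> quad_form I f x)"

definition symmetric_on :: "'a set \<Rightarrow> ('a \<Rightarrow> 'a \<Rightarrow> real) \<Rightarrow> bool" where
  "symmetric_on I f \<longleftrightarrow> (\<forall>i\<in>I. \<forall>j\<in>I. f i j = f j i)"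

definition frobenius_on :: "'a set \<Rightarrow> ('a \<Rightarrow> 'a \<Rightarrow> real) \<Rightarrow> ('a \<Rightarrow> 'a \<Rightarrow> real) \<Rightarrow> real" where
  "frobenius_on I g f = (\<Sum>i\<in>I. \<Sum>j\<in>I. g i j * f i j)"

text \<open>If \<open>f a a = 0\<close> the division gives \<open>0\<close> and \<open>schur_complement f a = f\<close>; for positive
  semidefinite \<open>f\<close> this is harmless, since row and column \<open>a\<close> of \<open>f\<close> then vanish.\<close>

definition schur_complement :: "('a \<Rightarrow> 'a \<Rightarrow> real) \<Rightarrow> 'a \<Rightarrow> 'a \<Rightarrow> 'a \<Rightarrow> real" where
  "schur_complement f a i j = f i j - f i a * f a j / f a a"

lemma symmetric_onD: "symmetric_on I f \<Longrightarrow> i \<in> I \<Longrightarrow> j \<in> I \<Longrightarrow> f i j = f j i"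
  unfolding symmetric_on_def by blast

lemma quad_form_restrict:
  assumes "finite I" "J \<subseteq> I"
  shows "quad_form J f x = quad_form I f (\<lambda>i. if i \<in> J then x i else 0)"
  unfolding quad_form_def using assms by (intro sum.mono_neutral_cong_left) auto

lemma psd_on_subset:
  assumes "finite I" "J \<subseteq> I" "psd_on I f"
  shows "psd_on J f"
  using assms(3) unfolding psd_on_def quad_form_restrict[OF assms(1,2)] by blast

lemma quad_form_shift:
  assumes "finite I" "a \<in> I"
  shows "quad_form I f (\<lambda>i. x i + (if i = a then c else 0)) =
    quad_form I f x + c * (\<Sum>j\<in>I. f a j * x j) + c * (\<Sum>i\<in>I. x i * f i a) + c * c * f a a"
proof -
  have expand: "(x i + (if i = a then c else 0)) * f i j * (x j + (if j = a then c else 0))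
      = x i * f i j * x j + (if i = a then c * f a j * x j else 0) + (if j = a then c * x i * f i a else 0)
        + (if i = a then if j = a then c * c * f a a else 0 else 0)" for i j
    by (auto simp: algebra_simps)
  have "(\<Sum>i\<in>I. \<Sum>j\<in>I. if i = a then c * f a j * x j else 0) = c * (\<Sum>j\<in>I. f a j * x j)"
    using assms by (subst sum.swap) (simp add: sum_distrib_left mult.assoc)
  moreover have "(\<Sum>i\<in>I. \<Sum>j\<in>I. if j = a then c * x i * f i a else 0) = c * (\<Sum>i\<in>I. x i * f i a)"
    using assms by (simp add: sum_distrib_left mult.assoc)
  moreover have "(\<Sum>i\<in>I. \<Sum>j\<in>I. if i = a then if j = a then c * c * f a a else 0 else 0) = c * c * f a a"
    using assms by (subst sum.swap) simp
  ultimately show ?thesis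
    unfolding quad_form_def expand sum.distrib by simp
qed

lemma quad_form_unit:
  assumes "finite I" "a \<in> I"
  shows "quad_form I f (\<lambda>i. if i = a then 1 else 0) = f a a"
  using quad_form_shift[OF assms, of f "\<lambda>_. 0" 1] by (simp add: quad_form_def)

lemma psd_on_diag_nonneg: "finite I \<Longrightarrow> a \<in> I \<Longrightarrow> psd_on I f \<Longrightarrow> 0 \<le> f a a"
  by (metis psd_on_def quad_form_unit)

lemma psd_on_zero_diag_row:
  assumes "finite I" "a \<in> I" "j \<in> I" "symmetric_on I f" "psd_on I f" "f a a = 0"
  shows "f a j = 0"
proof (rule ccontr)
  assume nz: "f a j \<noteq> 0"
  define t where "t = - (f j j + 1) / (2 * f a j)"
  have row: "(\<Sum>k\<in>I. f a k * (if k = j then 1 else 0)) = f a j"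
    and col: "(\<Sum>k\<in>I. (if k = j then 1 else 0) * f k a) = f a j"
    using assms(1-3) symmetric_onD[OF assms(4,3,2)] by (simp_all add: of_bool_def[symmetric])
  let ?x = "\<lambda>i. (if i = j then 1 else 0) + (if i = a then t else 0)"
  have "quad_form I f ?x = f j j + 2 * t * f a j"
    unfolding quad_form_shift[OF assms(1,2)] row col quad_form_unit[OF assms(1,3)] assms(6) by simp
  also have "\<dots> = -1"
    unfolding t_def using nz by (simp add: field_simps)
  finally have "quad_form I f ?x = -1" .
  moreover have "0 \<le> quad_form I f ?x"
    using assms(5) unfolding psd_on_def ..
  ultimately show False by simp
qed

lemma psd_on_schur_complement:
  assumes "finite I" "a \<in> I" "symmetric_on I f" "psd_on I f"
  shows "psd_on I (schur_complement f a)"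
  unfolding psd_on_def
proof
  fix x
  define s where "s = (\<Sum>j\<in>I. f a j * x j)"
  have col: "(\<Sum>i\<in>I. x i * f i a) = s"
    unfolding s_def using symmetric_onD[OF assms(3) _ assms(2)] by (intro sum.cong) auto
  have "quad_form I (schur_complement f a) x
      = quad_form I f x - (\<Sum>i\<in>I. x i * f i a) * (\<Sum>j\<in>I. f a j * x j) / f a a"
    unfolding quad_form_def schur_complement_def sum_product sum_divide_distrib sum_subtractf[symmetric]
    by (intro sum.cong refl) (simp add: algebra_simps)
  also have "\<dots> = quad_form I f (\<lambda>i. x i + (if i = a then - s / f a a else 0))"
    unfolding quad_form_shift[OF assms(1,2)] col s_def[symmetric]
    by (cases "f a a = 0") (simp_all add: field_simps power2_eq_square)
  finally show "0 \<le> quad_form I (schur_complement f a) x"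
    using assms(4) unfolding psd_on_def by simp
qed

lemma schur_complement_zero_row_col:
  assumes "finite I" "a \<in> I" "j \<in> I" "symmetric_on I f" "psd_on I f"
  shows "schur_complement f a a j = 0" "schur_complement f a j a = 0"
proof -
  have "f a j = 0 \<and> f j a = 0" if "f a a = 0"
    using psd_on_zero_diag_row[OF assms that] symmetric_onD[OF assms(4,2,3)] by simp
  then show "schur_complement f a a j = 0" "schur_complement f a j a = 0"
    unfolding schur_complement_def by (cases "f a a = 0"; simp)+
qed

lemma frobenius_on_schur_split:
  assumes "a \<in> I" "symmetric_on I f"
  shows "frobenius_on I g f
    = frobenius_on I g (schur_complement f a) + quad_form I g (\<lambda>i. f i a) / f a a"
proof -
  have "g i j * f i j = g i j * schur_complement f a i j + f i a * g i j * f j a / f a a"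
    if "i \<in> I" "j \<in> I" for i j
  proof -
    have "f a j = f j a" using symmetric_onD[OF assms(2,1) that(2)] .
    then show ?thesis by (simp add: schur_complement_def right_diff_distrib mult_ac)
  qed
  then show ?thesis
    unfolding frobenius_on_def quad_form_def sum_divide_distrib sum.distrib[symmetric]
    by (intro sum.cong refl) simp
qed

lemma frobenius_on_insert_zero_row_col:
  assumes "finite J" "a \<notin> J" "\<And>j. j \<in> insert a J \<Longrightarrow> h a j = 0 \<and> h j a = 0"
  shows "frobenius_on (insert a J) g h = frobenius_on J g h"
  using assms by (simp add: frobenius_on_def sum.distrib)

lemma frobenius_on_psd_nonneg:
  assumes "finite I" "symmetric_on I f" "psd_on I f" "psd_on I g"
  shows "0 \<le> frobenius_on I g f"
  using assms
proof (induction I arbitrary: f rule: finite_induct)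
  case empty
  then show ?case by (simp add: frobenius_on_def)
next
  case (insert a J)
  let ?h = "schur_complement f a"
  have fin: "finite (insert a J)" using insert.hyps by simp
  have "symmetric_on J ?h"
    unfolding symmetric_on_def schur_complement_def
    using symmetric_onD[OF insert.prems(1)] by (metis insertCI mult.commute)
  moreover have "psd_on J ?h"
    using psd_on_subset[OF fin _ psd_on_schur_complement[OF fin _ insert.prems(1,2)]] by blast
  moreover have "psd_on J g"
    using psd_on_subset[OF fin _ insert.prems(3)] by blast
  ultimately have "0 \<le> frobenius_on J g ?h"
    by (rule insert.IH)
  moreover have "frobenius_on (insert a J) g ?h = frobenius_on J g ?h"
    using schur_complement_zero_row_col[OF fin _ _ insert.prems(1,2)]
    by (intro frobenius_on_insert_zero_row_col[OF insert.hyps]) auto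
  moreover have "0 \<le> quad_form (insert a J) g (\<lambda>i. f i a) / f a a"
    using insert.prems psd_on_diag_nonneg[OF fin, of a f] unfolding psd_on_def by simp
  ultimately show ?case
    using frobenius_on_schur_split[of a "insert a J" f g] insert.prems(1) by simp
qed

section \<open>Positive semidefinite matrices\<close>

lemma transpose_add: "transpose (A + B) = transpose A + transpose B"
  for A B :: "'a::plus^'n^'m"
  by (simp add: transpose_def vec_eq_iff)

lemma matrix_add_rdistrib: "(A + B) ** C = A ** C + B ** C"
  for A B :: "'a::semiring_1^'n^'m" and C :: "'a^'p^'n"
  by (simp add: vec_eq_iff matrix_matrix_mult_def sum.distrib distrib_right)

lemma trace_congruence: "trace (M ** (C ** S ** transpose C)) = trace (transpose C ** M ** C ** S)"
  for M :: "'a::comm_semiring_1^'n^'n" and C :: "'a^'k^'n"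
  by (metis matrix_mul_assoc trace_mul_sym)

lemma psd_symmetric: "psd A \<Longrightarrow> A $ j $ i = A $ i $ j"
  unfolding psd_def by (metis transpose_def vec_lambda_beta)

lemma psd_imp_psd_on:
  fixes A :: "real^'n^'n"
  shows "psd A \<Longrightarrow> psd_on UNIV (\<lambda>i j. A $ i $ j)"
  unfolding psd_on_def
proof
  fix x :: "'n \<Rightarrow> real"
  assume "psd A"
  have "quad_form UNIV (\<lambda>i j. A $ i $ j) x = (\<chi> i. x i) \<bullet> (A *v (\<chi> i. x i))"
    unfolding quad_form_def inner_vec_def matrix_vector_mult_def
    by (simp add: sum_distrib_left algebra_simps)
  then show "0 \<le> quad_form UNIV (\<lambda>i j. A $ i $ j) x"
    using \<open>psd A\<close> unfolding psd_def by simp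
qed

lemma psd_imp_symmetric_on: "psd A \<Longrightarrow> symmetric_on UNIV (\<lambda>i j. A $ i $ j)"
  unfolding symmetric_on_def by (metis psd_symmetric)

lemma trace_mult_psd_nonneg:
  fixes A B :: "real^'n^'n"
  assumes "psd A" "psd B"
  shows "0 \<le> trace (A ** B)"
proof -
  have "trace (A ** B) = frobenius_on UNIV (\<lambda>i j. A $ i $ j) (\<lambda>i j. B $ i $ j)"
    unfolding trace_def frobenius_on_def matrix_matrix_mult_def
    using psd_symmetric[OF assms(2)] by simp
  also have "0 \<le> \<dots>"
    by (intro frobenius_on_psd_nonneg psd_imp_symmetric_on psd_imp_psd_on assms) simp
  finally show ?thesis .
qed

lemma psd_add: "psd A \<Longrightarrow> psd B \<Longrightarrow> psd (A + B)"
  unfolding psd_def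
  by (simp add: transpose_add matrix_vector_mult_add_rdistrib inner_add_right)

lemma psd_scaleR: "0 \<le> c \<Longrightarrow> psd A \<Longrightarrow> psd (c *\<^sub>R A)"
  unfolding psd_def
  by (simp add: transpose_scalar scaleR_matrix_vector_assoc[symmetric])

lemma pd_imp_psd: "pd A \<Longrightarrow> psd A"
  unfolding pd_def psd_def by (metis inner_zero_left matrix_vector_mult_0_right order.refl less_imp_le)

lemma pd_add_psd: "pd A \<Longrightarrow> psd B \<Longrightarrow> pd (A + B)"
  unfolding psd_def pd_def
  by (simp add: transpose_add matrix_vector_mult_add_rdistrib inner_add_right add_pos_nonneg)

lemma psd_congruence:
  fixes C :: "real^'k^'n" and M :: "real^'n^'n"
  assumes "psd M"
  shows "psd (transpose C ** M ** C)"
proof -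
  have "x \<bullet> ((transpose C ** M ** C) *v x) = (C *v x) \<bullet> (M *v (C *v x))" for x
  proof -
    have "(transpose C ** M ** C) *v x = transpose C *v (M *v (C *v x))"
      by (simp add: matrix_vector_mul_assoc matrix_mul_assoc)
    then show ?thesis
      by (metis dot_lmul_matrix inner_commute transpose_matrix_vector)
  qed
  then show ?thesis
    using assms unfolding psd_def by (simp add: matrix_transpose_mul matrix_mul_assoc)
qed

lemma psd_outer: "psd (outer z)"
proof -
  have "x \<bullet> (outer z *v x) = (z \<bullet> x) * (z \<bullet> x)" for x
    unfolding outer_def inner_vec_def matrix_vector_mult_def
    by (simp add: sum_distrib_left sum_distrib_right algebra_simps sum_product)
  then show ?thesis
    unfolding psd_def outer_def by (simp add: transpose_def vec_eq_iff mult.commute)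
qed

lemma pd_invertible:
  fixes M :: "real^'n^'n"
  assumes "pd M"
  shows "invertible M"
proof -
  have "\<forall>x. M *v x = 0 \<longrightarrow> x = 0"
    using assms unfolding pd_def by (metis inner_zero_right less_irrefl)
  then show ?thesis
    unfolding invertible_left_inverse matrix_left_invertible_ker[symmetric] by blast
qed

lemma matrix_inv_cancel:
  fixes M :: "real^'n^'n"
  assumes "invertible M"
  shows "M ** matrix_inv M = mat 1" "matrix_inv M ** M = mat 1"
proof -
  have "M ** matrix_inv M = mat 1 \<and> matrix_inv M ** M = mat 1"
    using assms unfolding invertible_def matrix_inv_def by (rule someI_ex)
  then show "M ** matrix_inv M = mat 1" "matrix_inv M ** M = mat 1" by auto
qed

lemma transpose_matrix_inv_symmetric:
  fixes M :: "real^'n^'n"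
  assumes "invertible M" "transpose M = M"
  shows "transpose (matrix_inv M) = matrix_inv M"
proof -
  have left_inv: "transpose (matrix_inv M) ** M = mat 1"
    using matrix_inv_cancel(1)[OF assms(1)] assms(2) by (metis matrix_transpose_mul transpose_mat)
  have "transpose (matrix_inv M) = transpose (matrix_inv M) ** (M ** matrix_inv M)"
    by (simp add: matrix_inv_cancel(1)[OF assms(1)])
  also have "\<dots> = matrix_inv M"
    by (simp add: matrix_mul_assoc left_inv)
  finally show ?thesis .
qed

section \<open>Block matrices\<close>

lemma sum_UNIV_Plus:
  "(\<Sum>r\<in>UNIV. f r) = (\<Sum>i\<in>UNIV. f (Inl i)) + (\<Sum>j\<in>UNIV. f (Inr j))"
  for f :: "'a::finite + 'b::finite \<Rightarrow> 'c::comm_monoid_add"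
  by (subst UNIV_Plus_UNIV[symmetric], subst sum.Plus) (simp_all add: o_def)

lemma psd_bdiag:
  assumes "psd Q" "psd R"
  shows "psd (bdiag Q R)"
proof -
  have "x \<bullet> (bdiag Q R *v x)
      = (\<chi> i. x $ Inl i) \<bullet> (Q *v (\<chi> i. x $ Inl i)) + (\<chi> i. x $ Inr i) \<bullet> (R *v (\<chi> i. x $ Inr i))" for x
    by (simp add: inner_vec_def matrix_vector_mult_def bdiag_def sum_UNIV_Plus)
  moreover have "transpose (bdiag Q R) = bdiag Q R"
    using psd_symmetric[OF assms(1)] psd_symmetric[OF assms(2)]
    by (auto simp: vec_eq_iff transpose_def bdiag_def split: sum.split)
  ultimately show ?thesis
    using assms unfolding psd_def by simp
qed

lemma bdiag_add_scaleR: "bdiag (Q + c *\<^sub>R Q') (R + c *\<^sub>R R') = bdiag Q R + c *\<^sub>R bdiag Q' R'"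
  by (auto simp: vec_eq_iff bdiag_def split: sum.split)

lemma bdiag_add_AB_quadratic:
  "bdiag Q R + transpose (AB A B) ** X ** AB A B =
   blk (Q + transpose A ** X ** A) (transpose A ** X ** B) (transpose B ** X ** A) (R + transpose B ** X ** B)"
  by (auto simp: vec_eq_iff bdiag_def blk_def AB_def matrix_matrix_mult_def transpose_def split: sum.split)

lemma blk_mult_IF:
  "blk M11 M12 M21 M22 ** IF F
   = (\<chi> r c. case r of Inl i \<Rightarrow> (M11 + M12 ** F) $ i $ c | Inr j \<Rightarrow> (M21 + M22 ** F) $ j $ c)"
  by (auto simp: vec_eq_iff blk_def IF_def matrix_matrix_mult_def sum_UNIV_Plus mat_def
      of_bool_def[symmetric] split: sum.split)

lemma transpose_IF_mult:
  "transpose (IF F) ** (\<chi> r c. case r of Inl i \<Rightarrow> Y1 $ i $ c | Inr j \<Rightarrow> Y2 $ j $ c)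
   = Y1 + transpose F ** Y2"
  by (auto simp: vec_eq_iff IF_def matrix_matrix_mult_def sum_UNIV_Plus mat_def transpose_def
      of_bool_def[symmetric] split: sum.split)

lemma transpose_IF_blk_IF:
  "transpose (IF F) ** blk M11 M12 M21 M22 ** IF F
   = M11 + M12 ** F + transpose F ** M21 + transpose F ** M22 ** F"
  unfolding matrix_mul_assoc[symmetric] blk_mult_IF transpose_IF_mult
  by (simp add: matrix_add_ldistrib matrix_mul_assoc add.assoc)

lemma transpose_IF_blk_IF_complete_square:
  fixes H11 :: "real^'n^'n" and H21 :: "real^'n^'m" and H22 :: "real^'m^'m" and F :: "real^'n^'m"
  assumes "invertible H22" "transpose H22 = H22"
  shows "transpose (IF F) ** blk H11 (transpose H21) H21 H22 ** IF F
    = H11 - transpose H21 ** matrix_inv H22 ** H21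
      + transpose (F + matrix_inv H22 ** H21) ** H22 ** (F + matrix_inv H22 ** H21)"
proof -
  let ?Hi = "matrix_inv H22"
  have cancel: "H22 ** (?Hi ** Y) = Y" for Y :: "real^'p^'m"
    by (simp add: matrix_mul_assoc matrix_inv_cancel(1)[OF assms(1)])
  have "transpose (F + ?Hi ** H21) = transpose F + transpose H21 ** ?Hi"
    by (simp add: transpose_add matrix_transpose_mul transpose_matrix_inv_symmetric[OF assms])
  then have "transpose (F + ?Hi ** H21) ** H22 ** (F + ?Hi ** H21)
      = transpose F ** (H22 ** F) + transpose F ** H21 + transpose H21 ** F + transpose H21 ** (?Hi ** H21)"
    by (simp add: matrix_add_ldistrib matrix_add_rdistrib matrix_mul_assoc[symmetric] cancel
        matrix_inv_cancel(2)[OF assms(1)] del: matrix_mul_lid)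
  then show ?thesis
    unfolding transpose_IF_blk_IF by (simp add: matrix_mul_assoc)
qed

section \<open>Riccati recursion and the Lagrangian\<close>

definition Mlam :: "('n::finite, 'm::finite) lqg \<Rightarrow> real \<Rightarrow> nat \<Rightarrow> real^'m^'m" where
  "Mlam P l k = sR P k + l *\<^sub>R sRt P k + transpose (sB P) ** Xlam P l (Suc k) ** sB P"

lemma Xlam_last: "Xlam P l (sN P) = sQf P + l *\<^sub>R sQtf P"
  by (simp add: Xlam_def)

lemma Xlam_step:
  assumes "k < sN P"
  shows "Xlam P l k = transpose (sA P) ** Xlam P l (Suc k) ** sA P
    - transpose (sA P) ** Xlam P l (Suc k) ** sB P ** matrix_inv (Mlam P l k)
        ** transpose (sB P) ** Xlam P l (Suc k) ** sA P
    + (sQ P k + l *\<^sub>R sQt P k)"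
proof -
  have "sN P - k = Suc (sN P - Suc k)" "sN P - Suc (sN P - Suc k) = k"
    using assms by auto
  then show ?thesis
    unfolding Xlam_def Mlam_def by (simp add: Let_def add.assoc)
qed

lemma Plam_eq_bdiag_AB:
  "Plam P l k = bdiag (sQ P k + l *\<^sub>R sQt P k) (sR P k + l *\<^sub>R sRt P k)
     + transpose (AB (sA P) (sB P)) ** Xlam P l (Suc k) ** AB (sA P) (sB P)"
  by (simp add: Plam_def Let_def bdiag_add_AB_quadratic)

lemma transpose_IF_Plam_IF:
  assumes "k < sN P" "psd (Xlam P l (Suc k))" "pd (Mlam P l k)"
  shows "transpose (IF F) ** Plam P l k ** IF F
    = Xlam P l k + transpose (F - Flam P l k) ** Mlam P l k ** (F - Flam P l k)"
proof -
  let ?A = "sA P" and ?B = "sB P" and ?X = "Xlam P l (Suc k)" and ?M = "Mlam P l k"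
  let ?H21 = "transpose ?B ** ?X ** ?A"
  have X_sym: "transpose ?X = ?X"
    using assms(2) unfolding psd_def by blast
  have H12: "transpose ?H21 = transpose ?A ** ?X ** ?B"
    by (simp add: matrix_transpose_mul X_sym matrix_mul_assoc)
  have "Plam P l k = blk (sQ P k + l *\<^sub>R sQt P k + transpose ?A ** ?X ** ?A) (transpose ?H21) ?H21 ?M"
    unfolding H12 by (simp add: Plam_def Mlam_def Let_def)
  moreover have "F - Flam P l k = F + matrix_inv ?M ** ?H21"
    by (simp add: Flam_def Mlam_def matrix_mul_assoc)
  moreover have "Xlam P l k
      = sQ P k + l *\<^sub>R sQt P k + transpose ?A ** ?X ** ?A - transpose ?H21 ** matrix_inv ?M ** ?H21"
    unfolding Xlam_step[OF assms(1)] H12 by (simp add: matrix_mul_assoc)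
  moreover have "invertible ?M" "transpose ?M = ?M"
    using pd_invertible[OF assms(3)] assms(3) unfolding pd_def by blast+
  ultimately show ?thesis
    using transpose_IF_blk_IF_complete_square by metis
qed

lemma Mlam_pd:
  assumes "psd (Xlam P l (Suc k))" "pd (sR P k + l *\<^sub>R sRt P k)"
  shows "pd (Mlam P l k)"
  unfolding Mlam_def by (rule pd_add_psd[OF assms(2) psd_congruence[OF assms(1)]])

lemma Xlam_psd:
  assumes "psd (sQf P + l *\<^sub>R sQtf P)"
    and "\<And>k. k < sN P \<Longrightarrow> psd (sQ P k + l *\<^sub>R sQt P k)"
    and "\<And>k. k < sN P \<Longrightarrow> pd (sR P k + l *\<^sub>R sRt P k)"
    and "k \<le> sN P"
  shows "psd (Xlam P l k)"
  using assms(4)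
proof (induction k rule: inc_induct)
  case base
  then show ?case using assms(1) by (simp add: Xlam_last)
next
  case (step k)
  have "pd (Mlam P l k)"
    using Mlam_pd[OF step.IH assms(3)[OF step.hyps(2)]] .
  then have "Xlam P l k = transpose (IF (Flam P l k)) ** Plam P l k ** IF (Flam P l k)"
    using transpose_IF_Plam_IF[OF step.hyps(2) step.IH] by simp
  moreover have "psd (Plam P l k)"
    unfolding Plam_eq_bdiag_AB
    using psd_bdiag[OF assms(2) pd_imp_psd[OF assms(3)]] psd_congruence[OF step.IH] step.hyps(2)
    by (intro psd_add) auto
  ultimately show ?case
    using psd_congruence by metis
qed

definition state_cov :: "('n::finite, 'm::finite) lqg \<Rightarrow> (nat \<Rightarrow> real^('n + 'm)^('n + 'm)) \<Rightarrow> nat \<Rightarrow> real^'n^'n" where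
  "state_cov P S k = (case k of
      0 \<Rightarrow> sV P + outer (sz P)
    | Suc j \<Rightarrow> AB (sA P) (sB P) ** S j ** transpose (AB (sA P) (sB P)) + sW P)"

lemma dyn_feasible_state_cov:
  assumes "dyn_feasible P S F" "k < sN P"
  shows "S k = IF (F k) ** state_cov P S k ** transpose (IF (F k))"
  using assms by (cases k) (simp_all add: dyn_feasible_def Sinit_def Phi_def state_cov_def)

lemma state_cov_psd:
  assumes "dyn_feasible P S F" "psd (sV P)" "psd (sW P)" "k \<le> sN P"
  shows "psd (state_cov P S k)"
  using assms(4)
proof (induction k)
  case 0
  then show ?case using assms(2) by (simp add: state_cov_def psd_add psd_outer)
next
  case (Suc k)
  then have "psd (S k)"
    using dyn_feasible_state_cov[OF assms(1)] psd_congruence[of _ "transpose (IF (F k))"] by simp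
  then show ?case
    using psd_congruence[of _ "transpose (AB (sA P) (sB P))"] assms(3)
    by (simp add: state_cov_def psd_add)
qed

definition feedback_gap :: "('n::finite, 'm::finite) lqg \<Rightarrow> real \<Rightarrow> (nat \<Rightarrow> real^('n + 'm)^('n + 'm))
    \<Rightarrow> (nat \<Rightarrow> real^'n^'m) \<Rightarrow> nat \<Rightarrow> real" where
  "feedback_gap P l S F k =
     trace (transpose (F k - Flam P l k) ** Mlam P l k ** (F k - Flam P l k) ** state_cov P S k)"

lemma feedback_gap_Flam: "feedback_gap P l S (Flam P l) k = 0"
  by (simp add: feedback_gap_def trace_def)

lemma feedback_gap_nonneg:
  assumes "dyn_feasible P S F" "psd (sV P)" "psd (sW P)" "k < sN P" "pd (Mlam P l k)"
  shows "0 \<le> feedback_gap P l S F k"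
  unfolding feedback_gap_def
  using assms(4)
  by (intro trace_mult_psd_nonneg psd_congruence pd_imp_psd[OF assms(5)] state_cov_psd[OF assms(1-3)]) simp

lemma stage_cost_completion:
  assumes "dyn_feasible P S F" "k < sN P" "psd (Xlam P l (Suc k))" "pd (Mlam P l k)"
  shows "trace (bdiag (sQ P k + l *\<^sub>R sQt P k) (sR P k + l *\<^sub>R sRt P k) ** S k)
      + trace (Xlam P l (Suc k) ** state_cov P S (Suc k))
    = trace (Xlam P l k ** state_cov P S k) + trace (Xlam P l (Suc k) ** sW P) + feedback_gap P l S F k"
proof -
  let ?G = "AB (sA P) (sB P)" and ?X = "Xlam P l (Suc k)"
  have "trace (?X ** state_cov P S (Suc k)) = trace (transpose ?G ** ?X ** ?G ** S k) + trace (?X ** sW P)"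
    by (simp add: state_cov_def matrix_add_ldistrib trace_add trace_congruence)
  then have "trace (bdiag (sQ P k + l *\<^sub>R sQt P k) (sR P k + l *\<^sub>R sRt P k) ** S k)
      + trace (?X ** state_cov P S (Suc k)) = trace (Plam P l k ** S k) + trace (?X ** sW P)"
    by (simp add: Plam_eq_bdiag_AB matrix_add_rdistrib trace_add)
  also have "trace (Plam P l k ** S k)
      = trace (transpose (IF (F k)) ** Plam P l k ** IF (F k) ** state_cov P S k)"
    unfolding dyn_feasible_state_cov[OF assms(1,2)] trace_congruence ..
  also have "\<dots> = trace (Xlam P l k ** state_cov P S k) + feedback_gap P l S F k"
    unfolding transpose_IF_Plam_IF[OF assms(2-4)] feedback_gap_def
    by (simp add: matrix_add_rdistrib trace_add)
  finally show ?thesis by simp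
qed

lemma qcost_Lagrangian:
  "qcost P (sQf P + l *\<^sub>R sQtf P) (\<lambda>k. sQ P k + l *\<^sub>R sQt P k) (\<lambda>k. sR P k + l *\<^sub>R sRt P k) S
   = Jp P S + l * Ccost P S"
  unfolding Jp_def Ccost_def qcost_def bdiag_add_scaleR
  by (simp add: matrix_add_rdistrib trace_add scalar_matrix_assoc[symmetric] trace_def
      sum.distrib sum_distrib_left algebra_simps)

definition riccati_value :: "('n::finite, 'm::finite) lqg \<Rightarrow> real \<Rightarrow> real" where
  "riccati_value P l = trace (Xlam P l 0 ** (sV P + outer (sz P)))
     + (\<Sum>k<sN P. trace (Xlam P l (Suc k) ** sW P))"

lemma Lagrangian_decomposition:
  assumes "dyn_feasible P S F" "0 < sN P"
    and "\<And>k. k \<le> sN P \<Longrightarrow> psd (Xlam P l k)" "\<And>k. k < sN P \<Longrightarrow> pd (Mlam P l k)"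
  shows "Jp P S + l * Ccost P S = riccati_value P l + (\<Sum>k<sN P. feedback_gap P l S F k)"
proof -
  let ?t = "\<lambda>k. trace (Xlam P l k ** state_cov P S k)"
  let ?b = "\<lambda>k. trace (bdiag (sQ P k + l *\<^sub>R sQt P k) (sR P k + l *\<^sub>R sRt P k) ** S k)"
  let ?w = "\<lambda>k. trace (Xlam P l (Suc k) ** sW P)"
  have "Jp P S + l * Ccost P S = ?t (sN P) + (\<Sum>k<sN P. ?b k)"
    using assms(2) unfolding qcost_Lagrangian[symmetric]
    by (simp add: qcost_def Xlam_last state_cov_def split: nat.split)
  also have "(\<Sum>k<sN P. ?b k) = (\<Sum>k<sN P. ?t k - ?t (Suc k) + ?w k + feedback_gap P l S F k)"
    using stage_cost_completion[OF assms(1)] assms(3,4)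
    by (intro sum.cong) (auto simp: algebra_simps)
  also have "\<dots> = ?t 0 - ?t (sN P) + (\<Sum>k<sN P. ?w k) + (\<Sum>k<sN P. feedback_gap P l S F k)"
    by (simp add: sum.distrib sum_lessThan_telescope'[of ?t])
  finally show ?thesis
    by (simp add: riccati_value_def state_cov_def)
qed

lemma dyn_feasible_Slam: "dyn_feasible P (Slam P l) (Flam P l)"
  unfolding dyn_feasible_def
proof (intro conjI allI impI)
  fix k assume "1 \<le> k \<and> k < sN P"
  then obtain j where "k = Suc j" by (cases k) auto
  then show "Slam P l k = Phi P (Flam P l k) (Slam P l (k - 1))" by simp
qed simp

theorem proposition5:
  fixes P :: "('n::finite, 'm::finite) lqg" and l :: real
  assumes horizon: "0 < sN P"
    and Qf_psd: "psd (sQf P)" and Qtf_psd: "psd (sQtf P)"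
    and Q_psd: "\<forall>k < sN P. psd (sQ P k)" and Qt_psd: "\<forall>k < sN P. psd (sQt P k)"
    and R_pd: "\<forall>k < sN P. \<forall>\<mu> > 0. pd (sR P k + \<mu> *\<^sub>R sRt P k)"
    and V_pd: "pd (sV P)" and W_pd: "pd (sW P)"
    and strict_feas: "\<exists>S F. dyn_feasible P S F \<and> Ccost P S < sgamma P"
    and unconstr_viol: "Ccost P (Slam P 0) > sgamma P"
    and in_Lambda: "l > 0" "Ccost P (Slam P l) = sgamma P"
  shows "optimal P (Slam P l) (Flam P l)"
proof -
  \<comment> \<open>strict_feas and unconstr_viol only serve the existence of such an l; sufficiency does not need them.\<close>
  have l_nonneg: "0 \<le> l"
    using in_Lambda(1) by simp
  have X_psd: "psd (Xlam P l k)" if "k \<le> sN P" for k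
    using that Qf_psd Qtf_psd Q_psd Qt_psd R_pd in_Lambda(1)
    by (intro Xlam_psd psd_add psd_scaleR l_nonneg) auto
  have M_pd: "pd (Mlam P l k)" if "k < sN P" for k
    using that X_psd R_pd in_Lambda(1) by (intro Mlam_pd) auto
  note decomposition = Lagrangian_decomposition[OF _ horizon X_psd M_pd]
  have Slam_value: "Jp P (Slam P l) + l * sgamma P = riccati_value P l"
    using decomposition[OF dyn_feasible_Slam[of P l]] in_Lambda(2) by (simp add: feedback_gap_Flam)
  have "Jp P (Slam P l) \<le> Jp P S" if "dyn_feasible P S F" "Ccost P S \<le> sgamma P" for S F
  proof -
    have "0 \<le> (\<Sum>k<sN P. feedback_gap P l S F k)"
      using V_pd W_pd M_pd that(1) by (intro sum_nonneg feedback_gap_nonneg) (auto intro: pd_imp_psd)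
    moreover have "l * Ccost P S \<le> l * sgamma P"
      using that(2) in_Lambda(1) by simp
    ultimately show ?thesis
      using Slam_value decomposition[OF that(1)] by linarith
  qed
  then show ?thesis
    unfolding optimal_def feasible_def using dyn_feasible_Slam in_Lambda(2) by auto
qed

end
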